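(* Let $\mathcal{M}=(E,\rho)$ be a $q$-matroid and $V\le E$. Then \[ \mathrm{cyc}(V)=\sum_{C\le V,\ C\text{ a circuit of }\mathcal{M}} C . \] Thus $\mathrm{cyc}(V)$ is an open space and in fact the largest open space contained in $V$. As a consequence, $V$ is independent if and only if $\mathrm{cyc}(V)=0$.
   Context: Let $\mathbb{F}=\mathbb{F}_q$, $E$ a finite-dimensional $\mathbb{F}$-vector space. A $q$-matroid is $\mathcal{M}=(E,\rho)$ with $\rho$ from subspaces of $E$ to $\mathbb{Z}_{\ge0}$ satisfying $0\le\rho(V)\le\dim V$, monotonicity, and submodularity $\rho(V+W)+\rho(V\cap W)\le\rho(V)+\rho(W)$. $V$ is independent if $\rho(V)=\dim V$, dependent otherwise. A circuit is a dependent subspace all of whose proper subspaces are independent. A subspace is open if it is a sum of circuits (the empty sum being $0$). The cyclic core of $V$ is $\mathrm{cyc}(V)=\{x\in V\mid\rho(W)=\rho(V)\text{ for all }W\le V\text{ with }W+\langle x\rangle=V\}$. *)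

theory Defs
  imports "HOL-Analysis.Cartesian_Space"
begin

text \<open>Ground space E = F^n with F a finite field (F_q); subspaces are
  vec.subspace, dimension vec.dim, sum of subspaces = span of union.\<close>

type_synonym ('f, 'n) rankfun = "('f ^ 'n) set \<Rightarrow> nat"

definition qmatroid :: "('f::{field,finite}, 'n::finite) rankfun \<Rightarrow> bool" where
  "qmatroid \<rho> \<longleftrightarrow>
     (\<forall>V. vec.subspace V \<longrightarrow> \<rho> V \<le> vec.dim V) \<and>
     (\<forall>V W. vec.subspace V \<and> vec.subspace W \<and> V \<subseteq> W \<longrightarrow> \<rho> V \<le> \<rho> W) \<and>
     (\<forall>V W. vec.subspace V \<and> vec.subspace W \<longrightarrow>
        \<rho> (vec.span (V \<union> W)) + \<rho> (V \<inter> W) \<le> \<rho> V + \<rho> W)"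

definition q_indep :: "('f::{field,finite}, 'n::finite) rankfun \<Rightarrow> ('f ^ 'n) set \<Rightarrow> bool" where
  "q_indep \<rho> V \<longleftrightarrow> vec.subspace V \<and> \<rho> V = vec.dim V"

definition q_dep :: "('f::{field,finite}, 'n::finite) rankfun \<Rightarrow> ('f ^ 'n) set \<Rightarrow> bool" where
  "q_dep \<rho> V \<longleftrightarrow> vec.subspace V \<and> \<rho> V \<noteq> vec.dim V"

definition q_circuit :: "('f::{field,finite}, 'n::finite) rankfun \<Rightarrow> ('f ^ 'n) set \<Rightarrow> bool" where
  "q_circuit \<rho> C \<longleftrightarrow> q_dep \<rho> C \<and>
     (\<forall>D. vec.subspace D \<and> D \<subset> C \<longrightarrow> q_indep \<rho> D)"

definition sum_spaces :: "('f::{field,finite} ^ 'n::finite) set set \<Rightarrow> ('f ^ 'n) set" where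
  "sum_spaces S = vec.span (\<Union> S)"

definition q_open :: "('f::{field,finite}, 'n::finite) rankfun \<Rightarrow> ('f ^ 'n) set \<Rightarrow> bool" where
  "q_open \<rho> U \<longleftrightarrow> (\<exists>S. (\<forall>C\<in>S. q_circuit \<rho> C) \<and> U = sum_spaces S)"

definition cyc :: "('f::{field,finite}, 'n::finite) rankfun \<Rightarrow> ('f ^ 'n) set \<Rightarrow> ('f ^ 'n) set" where
  "cyc \<rho> V = {x \<in> V. \<forall>W. vec.subspace W \<and> W \<subseteq> V \<and> vec.span (W \<union> {x}) = V \<longrightarrow> \<rho> W = \<rho> V}"

end

theory Submission
  imports Defs
begin

(* Everything rests on a one-step criterion: for y outside a subspace W, adjoining y leaves
   the rank unchanged iff some circuit lies in W + <y> but not in W.  If C is such a circuit,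
   then C \<inter> W is a hyperplane of C, hence independent, and submodularity for C and W bounds
   rho(W + <y>) by rho(W).  Conversely, an independent B \<le> W with rho(B) = rho(W) becomes
   dependent after adjoining y, so B + <y> contains a circuit, and that circuit is not inside W
   because (B + <y>) \<inter> W = B.  Hence x \<in> V lies outside cyc(V) iff some hyperplane W of V
   with W + <x> = V contains every circuit of V, i.e. iff x is not in the sum of these circuits. *)

lemma span_subspace_eq [simp]: "vec.subspace S \<Longrightarrow> vec.span S = S"
  by simp

lemma dim_span_Un_Int:
  assumes "vec.subspace S" "vec.subspace T"
  shows "vec.dim (vec.span (S \<union> T)) + vec.dim (S \<inter> T) = vec.dim S + vec.dim T"
  using vec.dim_sums_Int[OF assms] by (simp add: vec.span_Un assms)

lemma dim_span_insert_le: "vec.dim (vec.span (insert y S)) \<le> vec.dim S + 1"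
  by (simp add: vec.dim_insert)

lemma span_insert_eq_of_psubset:
  assumes "vec.subspace W" "vec.subspace U" "W \<subset> U" "U \<subseteq> vec.span (insert y W)"
  shows "U = vec.span (insert y W)"
proof (rule vec.subspace_dim_equal)
  have "vec.dim W < vec.dim U"
    using vec.dim_psubset[of W U] by (simp add: assms)
  then show "vec.dim (vec.span (insert y W)) \<le> vec.dim U"
    using dim_span_insert_le[of y W] by linarith
qed (use assms in auto)

lemma span_insert_Int:
  assumes "vec.subspace B" "vec.subspace W" "B \<subseteq> W" "y \<notin> W"
  shows "vec.span (insert y B) \<inter> W = B"
proof (rule ccontr)
  let ?X = "vec.span (insert y B) \<inter> W"
  assume "?X \<noteq> B"
  moreover have "B \<subseteq> ?X"
    using assms vec.span_superset[of "insert y B"] by auto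
  ultimately have "?X = vec.span (insert y B)"
    using assms by (intro span_insert_eq_of_psubset) (auto intro: vec.subspace_inter)
  then show False
    using assms vec.span_superset[of "insert y B"] by auto
qed

lemma hyperplane_separating_point:
  assumes "vec.subspace S" "vec.subspace V" "S \<subseteq> V" "x \<in> V" "x \<notin> S"
  obtains W where "vec.subspace W" "S \<subseteq> W" "x \<notin> W" "vec.span (insert x W) = V"
proof -
  obtain BS where BS: "BS \<subseteq> S" "vec.independent BS" "S \<subseteq> vec.span BS"
    by (rule vec.basis_exists)
  have "x \<notin> vec.span BS"
    using vec.span_minimal[OF BS(1) assms(1)] assms(5) by blast
  then have "vec.independent (insert x BS)"
    using BS(2) by (rule vec.independent_insertI)
  moreover have "insert x BS \<subseteq> V"
    using assms(3,4) BS(1) by auto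
  ultimately obtain B where B: "insert x BS \<subseteq> B" "B \<subseteq> V" "vec.independent B" "V \<subseteq> vec.span B"
    by (metis vec.maximal_independent_subset_extend)
  let ?W = "vec.span (B - {x})"
  have "x \<notin> ?W"
    using B(1,3) vec.independent_insert[of x "B - {x}"] by (auto simp: insert_absorb)
  moreover have "S \<subseteq> ?W"
    using BS(1,3) B(1) assms(5) vec.span_mono[of BS "B - {x}"] by auto
  moreover have "vec.span (insert x ?W) = V"
  proof
    have "?W \<subseteq> V"
      using B(2) assms(2) by (intro vec.span_minimal) auto
    then show "vec.span (insert x ?W) \<subseteq> V"
      using assms(2,4) by (intro vec.span_minimal) auto
    show "V \<subseteq> vec.span (insert x ?W)"
      using B(4) vec.span_mono[of B "insert x ?W"] vec.span_superset[of "B - {x}"] by auto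
  qed
  ultimately show ?thesis
    using that by blast
qed

lemma qmatroid_rank_le_dim: "qmatroid \<rho> \<Longrightarrow> vec.subspace V \<Longrightarrow> \<rho> V \<le> vec.dim V"
  unfolding qmatroid_def by blast

lemma qmatroid_rank_mono:
  "qmatroid \<rho> \<Longrightarrow> vec.subspace V \<Longrightarrow> vec.subspace W \<Longrightarrow> V \<subseteq> W \<Longrightarrow> \<rho> V \<le> \<rho> W"
  unfolding qmatroid_def by blast

lemma qmatroid_submodular:
  "qmatroid \<rho> \<Longrightarrow> vec.subspace V \<Longrightarrow> vec.subspace W \<Longrightarrow>
    \<rho> (vec.span (V \<union> W)) + \<rho> (V \<inter> W) \<le> \<rho> V + \<rho> W"
  unfolding qmatroid_def by blast

lemma rank_span_insert_le:
  assumes "qmatroid \<rho>" "vec.subspace D"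
  shows "\<rho> (vec.span (insert y D)) \<le> \<rho> D + 1"
proof -
  have "vec.span (D \<union> vec.span {y}) = vec.span (insert y D)"
    unfolding vec.span_eq by (auto intro: vec.span_base vec.span_mono[THEN subsetD])
  moreover have "\<rho> (vec.span {y}) \<le> 1"
    using qmatroid_rank_le_dim[OF assms(1), of "vec.span {y}"] dim_span_insert_le[of y "{}"] by simp
  ultimately show ?thesis
    using qmatroid_submodular[OF assms, of "vec.span {y}"] by simp
qed

lemma rank_add_dim_le:
  assumes qm: "qmatroid \<rho>" and "vec.subspace D" "vec.subspace W" "D \<subseteq> W"
  shows "\<rho> W + vec.dim D \<le> \<rho> D + vec.dim W"
  using assms(2-4)
proof (induction "vec.dim W - vec.dim D" arbitrary: D rule: less_induct)
  case less
  show ?case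
  proof (cases "W \<subseteq> D")
    case True
    then show ?thesis using less.prems by auto
  next
    case False
    then obtain y where y: "y \<in> W" "y \<notin> D" by blast
    let ?D = "vec.span (insert y D)"
    have D'W: "?D \<subseteq> W"
      using less.prems y by (intro vec.span_minimal) auto
    have dim_D': "vec.dim ?D = vec.dim D + 1"
      using y less.prems by (simp add: vec.dim_insert)
    moreover have "vec.dim ?D \<le> vec.dim W"
      using D'W by (rule vec.dim_subset)
    ultimately have "\<rho> W + vec.dim ?D \<le> \<rho> ?D + vec.dim W"
      using D'W less.prems by (intro less.hyps) auto
    then show ?thesis
      using dim_D' rank_span_insert_le[OF qm less.prems(1), of y] by linarith
  qed
qed

lemma q_indep_subspace:
  assumes "qmatroid \<rho>" "q_indep \<rho> I" "vec.subspace D" "D \<subseteq> I"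
  shows "q_indep \<rho> D"
  using assms rank_add_dim_le[OF assms(1,3), of I] qmatroid_rank_le_dim[OF assms(1,3)]
  unfolding q_indep_def by simp

lemma q_indep_zero: "qmatroid \<rho> \<Longrightarrow> q_indep \<rho> {0}"
  using qmatroid_rank_le_dim[of \<rho> "{0}"] unfolding q_indep_def by simp

lemma q_circuit_subspace: "q_circuit \<rho> C \<Longrightarrow> vec.subspace C"
  unfolding q_circuit_def q_dep_def by blast

lemma q_circuit_not_subset_q_indep:
  assumes "qmatroid \<rho>" "q_indep \<rho> I" "q_circuit \<rho> C"
  shows "\<not> C \<subseteq> I"
  using q_indep_subspace[OF assms(1,2) q_circuit_subspace[OF assms(3)]] assms(3)
  unfolding q_circuit_def q_dep_def q_indep_def by blast

lemma q_dep_contains_circuit: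
  assumes "q_dep \<rho> D"
  obtains C where "q_circuit \<rho> C" "C \<subseteq> D"
proof -
  let ?deps = "{C. q_dep \<rho> C \<and> C \<subseteq> D}"
  have "\<exists>C\<in>?deps. C \<subseteq> D \<and> (\<forall>C'\<in>?deps. C' \<subseteq> C \<longrightarrow> C = C')"
    by (rule finite_has_minimal2) (use assms in auto)
  then obtain C where C: "q_dep \<rho> C" "C \<subseteq> D" and minimal: "\<forall>C'\<in>?deps. C' \<subseteq> C \<longrightarrow> C = C'"
    by blast
  have "q_indep \<rho> E" if "vec.subspace E" "E \<subset> C" for E
  proof -
    have "\<not> q_dep \<rho> E"
      using minimal that C(2) by blast
    then show ?thesis
      using that(1) unfolding q_dep_def q_indep_def by blast
  qed
  then have "q_circuit \<rho> C"
    unfolding q_circuit_def using C(1) by blast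
  then show ?thesis
    using that C(2) by blast
qed

lemma rank_span_insert_le_of_circuit:
  assumes qm: "qmatroid \<rho>" and W: "vec.subspace W" and C: "q_circuit \<rho> C"
    and C_sub: "C \<subseteq> vec.span (insert y W)" and C_not_sub: "\<not> C \<subseteq> W"
  shows "\<rho> (vec.span (insert y W)) \<le> \<rho> W"
proof -
  have Cs: "vec.subspace C"
    using C by (rule q_circuit_subspace)
  have "W \<subset> vec.span (C \<union> W)"
    using C_not_sub vec.span_superset[of "C \<union> W"] by blast
  moreover have "vec.span (C \<union> W) \<subseteq> vec.span (insert y W)"
    using C_sub by (intro vec.span_minimal) (auto intro: vec.span_base)
  ultimately have span_CW: "vec.span (C \<union> W) = vec.span (insert y W)"
    using W by (intro span_insert_eq_of_psubset) auto
  have "vec.dim C \<le> vec.dim (C \<inter> W) + 1"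
    using dim_span_Un_Int[OF Cs W] dim_span_insert_le[of y W] unfolding span_CW by linarith
  moreover have "\<rho> C < vec.dim C"
    using C qmatroid_rank_le_dim[OF qm Cs] unfolding q_circuit_def q_dep_def by auto
  moreover have "\<rho> (C \<inter> W) = vec.dim (C \<inter> W)"
    using C C_not_sub vec.subspace_inter[OF Cs W] unfolding q_circuit_def q_indep_def by blast
  ultimately show ?thesis
    using qmatroid_submodular[OF qm Cs W] unfolding span_CW by linarith
qed

lemma rank_le_of_rank_span_insert_le:
  assumes qm: "qmatroid \<rho>" and B: "vec.subspace B" "B \<subseteq> W" and W: "vec.subspace W"
    and closed: "\<And>y. y \<in> W \<Longrightarrow> \<rho> (vec.span (insert y B)) \<le> \<rho> B"
  shows "\<rho> W \<le> \<rho> B"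
proof -
  have "\<rho> (vec.span (B \<union> Y)) \<le> \<rho> B" if "finite Y" "Y \<subseteq> W" for Y
    using that
  proof (induction Y rule: finite_induct)
    case empty
    then show ?case using B by simp
  next
    case (insert y Y)
    let ?U = "vec.span (B \<union> Y)" and ?By = "vec.span (insert y B)"
    have "vec.span (?U \<union> ?By) = vec.span (B \<union> insert y Y)"
      unfolding vec.span_eq by (auto intro: vec.span_base vec.span_mono[THEN subsetD])
    moreover have "\<rho> B \<le> \<rho> (?U \<inter> ?By)"
      using B vec.span_superset[of "B \<union> Y"] vec.span_superset[of "insert y B"]
      by (intro qmatroid_rank_mono[OF qm]) (auto intro: vec.subspace_inter)
    moreover have "\<rho> ?By \<le> \<rho> B"
      using insert.prems by (intro closed) simp
    ultimately show ?case
      using qmatroid_submodular[OF qm, of ?U ?By] insert by simp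
  qed
  from this[of W] show ?thesis
    using B W by (simp add: Un_absorb1)
qed

lemma exists_q_indep_rank_eq:
  assumes qm: "qmatroid \<rho>" and W: "vec.subspace W"
  obtains B where "q_indep \<rho> B" "B \<subseteq> W" "\<rho> B = \<rho> W"
proof -
  let ?indeps = "{B. q_indep \<rho> B \<and> B \<subseteq> W}"
  have "\<exists>B\<in>?indeps. {0} \<subseteq> B \<and> (\<forall>B'\<in>?indeps. B \<subseteq> B' \<longrightarrow> B = B')"
    by (rule finite_has_maximal2) (use q_indep_zero[OF qm] vec.subspace_0[OF W] in auto)
  then obtain B where B: "q_indep \<rho> B" "B \<subseteq> W" and maximal: "\<forall>B'\<in>?indeps. B \<subseteq> B' \<longrightarrow> B = B'"
    by blast
  have Bs: "vec.subspace B"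
    using B(1) unfolding q_indep_def by blast
  have "\<rho> (vec.span (insert y B)) \<le> \<rho> B" if y: "y \<in> W" for y
  proof (cases "y \<in> B")
    case True
    then show ?thesis using Bs by (simp add: insert_absorb)
  next
    case False
    let ?By = "vec.span (insert y B)"
    have "?By \<subseteq> W"
      using y B(2) W by (intro vec.span_minimal) auto
    moreover have "B \<noteq> ?By"
      using False vec.span_superset[of "insert y B"] by blast
    moreover have "B \<subseteq> ?By"
      using vec.span_superset[of "insert y B"] by blast
    ultimately have "\<not> q_indep \<rho> ?By"
      using maximal by blast
    then have "q_dep \<rho> ?By"
      unfolding q_indep_def q_dep_def by simp
    then obtain C where C: "q_circuit \<rho> C" "C \<subseteq> ?By"
      by (rule q_dep_contains_circuit)
    moreover have "\<not> C \<subseteq> B"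
      using q_circuit_not_subset_q_indep[OF qm B(1) C(1)] .
    ultimately show ?thesis
      by (rule rank_span_insert_le_of_circuit[OF qm Bs])
  qed
  then have "\<rho> W \<le> \<rho> B"
    using rank_le_of_rank_span_insert_le[OF qm Bs B(2) W] by blast
  moreover have "\<rho> B \<le> \<rho> W"
    using qmatroid_rank_mono[OF qm Bs W B(2)] .
  ultimately show ?thesis
    using that B by simp
qed

lemma circuit_if_rank_span_insert_eq:
  assumes qm: "qmatroid \<rho>" and W: "vec.subspace W" and y: "y \<notin> W"
    and eq: "\<rho> (vec.span (insert y W)) = \<rho> W"
  obtains C where "q_circuit \<rho> C" "C \<subseteq> vec.span (insert y W)" "\<not> C \<subseteq> W"
proof -
  obtain B where B: "q_indep \<rho> B" "B \<subseteq> W" "\<rho> B = \<rho> W"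
    using exists_q_indep_rank_eq[OF qm W] .
  have Bs: "vec.subspace B"
    using B(1) unfolding q_indep_def by blast
  let ?By = "vec.span (insert y B)"
  have By_sub: "?By \<subseteq> vec.span (insert y W)"
    using B(2) by (intro vec.span_mono) auto
  have "\<rho> ?By \<le> \<rho> B"
    using qmatroid_rank_mono[OF qm _ _ By_sub] eq B(3) by simp
  moreover have "vec.dim ?By = vec.dim B + 1"
    using y B(2) Bs by (auto simp: vec.dim_insert)
  ultimately have "q_dep \<rho> ?By"
    using B(1) unfolding q_indep_def q_dep_def by simp
  then obtain C where C: "q_circuit \<rho> C" "C \<subseteq> ?By"
    by (rule q_dep_contains_circuit)
  have "\<not> C \<subseteq> W"
  proof
    assume "C \<subseteq> W"
    then have "C \<subseteq> B"
      using C(2) span_insert_Int[OF Bs W B(2) y] by blast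
    then show False
      using q_circuit_not_subset_q_indep[OF qm B(1) C(1)] by blast
  qed
  then show ?thesis
    using that C By_sub by blast
qed

lemma rank_span_insert_eq_iff_circuit:
  assumes "qmatroid \<rho>" "vec.subspace W" "y \<notin> W"
  shows "\<rho> (vec.span (insert y W)) = \<rho> W \<longleftrightarrow>
    (\<exists>C. q_circuit \<rho> C \<and> C \<subseteq> vec.span (insert y W) \<and> \<not> C \<subseteq> W)"
proof
  assume "\<rho> (vec.span (insert y W)) = \<rho> W"
  then show "\<exists>C. q_circuit \<rho> C \<and> C \<subseteq> vec.span (insert y W) \<and> \<not> C \<subseteq> W"
    using circuit_if_rank_span_insert_eq[OF assms] by metis
next
  assume "\<exists>C. q_circuit \<rho> C \<and> C \<subseteq> vec.span (insert y W) \<and> \<not> C \<subseteq> W"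
  then have "\<rho> (vec.span (insert y W)) \<le> \<rho> W"
    using rank_span_insert_le_of_circuit[OF assms(1,2)] by blast
  moreover have "\<rho> W \<le> \<rho> (vec.span (insert y W))"
    using assms(2) by (intro qmatroid_rank_mono[OF assms(1)]) (auto intro: vec.span_base)
  ultimately show "\<rho> (vec.span (insert y W)) = \<rho> W"
    by simp
qed

lemma cyc_eq_sum_circuits:
  assumes qm: "qmatroid \<rho>" and V: "vec.subspace V"
  shows "cyc \<rho> V = sum_spaces {C. q_circuit \<rho> C \<and> C \<subseteq> V}"
proof -
  let ?S = "sum_spaces {C. q_circuit \<rho> C \<and> C \<subseteq> V}"
  have S_subspace: "vec.subspace ?S"
    unfolding sum_spaces_def by simp
  have S_le_V: "?S \<subseteq> V"
    unfolding sum_spaces_def using V by (intro vec.span_minimal) auto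
  have circuit_le_S: "C \<subseteq> ?S" if "q_circuit \<rho> C" "C \<subseteq> V" for C
    using that vec.span_superset[of "\<Union>{C. q_circuit \<rho> C \<and> C \<subseteq> V}"]
    unfolding sum_spaces_def by blast
  have S_le_W: "?S \<subseteq> W" if "vec.subspace W" "\<forall>C. q_circuit \<rho> C \<and> C \<subseteq> V \<longrightarrow> C \<subseteq> W" for W
    unfolding sum_spaces_def using that by (intro vec.span_minimal) auto
  show ?thesis
  proof (intro equalityI subsetI)
    fix x assume x: "x \<in> cyc \<rho> V"
    show "x \<in> ?S"
    proof (rule ccontr)
      assume "x \<notin> ?S"
      moreover have "x \<in> V"
        using x unfolding cyc_def by blast
      ultimately obtain W where W: "vec.subspace W" "?S \<subseteq> W" "x \<notin> W" "vec.span (insert x W) = V"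
        using hyperplane_separating_point[OF S_subspace V S_le_V] by blast
      have "W \<subseteq> V"
        using W(4) vec.span_superset[of "insert x W"] by blast
      moreover have "vec.span (W \<union> {x}) = V"
        using W(4) by simp
      ultimately have "\<rho> W = \<rho> V"
        using x W(1) unfolding cyc_def by blast
      then have "\<exists>C. q_circuit \<rho> C \<and> C \<subseteq> V \<and> \<not> C \<subseteq> W"
        using rank_span_insert_eq_iff_circuit[OF qm W(1) W(3)] unfolding W(4) by simp
      then show False
        using circuit_le_S W(2) by blast
    qed
  next
    fix x assume x: "x \<in> ?S"
    have "\<rho> W = \<rho> V" if W: "vec.subspace W" "W \<subseteq> V" "vec.span (W \<union> {x}) = V" for W
    proof (cases "x \<in> W")
      case True
      then show ?thesis using W by (simp add: insert_absorb)
    next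
      case False
      then have "\<not> ?S \<subseteq> W"
        using x by blast
      then have "\<exists>C. q_circuit \<rho> C \<and> C \<subseteq> V \<and> \<not> C \<subseteq> W"
        using S_le_W[OF W(1)] by blast
      moreover have "vec.span (insert x W) = V"
        using W(3) by simp
      ultimately show ?thesis
        using rank_span_insert_eq_iff_circuit[OF qm W(1) False] by simp
    qed
    then show "x \<in> cyc \<rho> V"
      using x S_le_V unfolding cyc_def by blast
  qed
qed

lemma q_open_subset_sum_circuits:
  assumes "q_open \<rho> U" "U \<subseteq> V"
  shows "U \<subseteq> sum_spaces {C. q_circuit \<rho> C \<and> C \<subseteq> V}"
proof -
  obtain T where T: "\<forall>C\<in>T. q_circuit \<rho> C" "U = sum_spaces T"
    using assms(1) unfolding q_open_def by blast
  have "\<Union>T \<subseteq> \<Union>{C. q_circuit \<rho> C \<and> C \<subseteq> V}"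
    using T assms(2) vec.span_superset unfolding sum_spaces_def by blast
  then show ?thesis
    unfolding T(2) sum_spaces_def by (rule vec.span_mono)
qed

lemma q_indep_iff_no_circuit:
  assumes qm: "qmatroid \<rho>" and V: "vec.subspace V"
  shows "q_indep \<rho> V \<longleftrightarrow> (\<forall>C. q_circuit \<rho> C \<longrightarrow> \<not> C \<subseteq> V)"
proof
  assume "q_indep \<rho> V"
  then show "\<forall>C. q_circuit \<rho> C \<longrightarrow> \<not> C \<subseteq> V"
    using q_circuit_not_subset_q_indep[OF qm] by blast
next
  assume no_circuit: "\<forall>C. q_circuit \<rho> C \<longrightarrow> \<not> C \<subseteq> V"
  show "q_indep \<rho> V"
  proof (rule ccontr)
    assume "\<not> q_indep \<rho> V"
    then have "q_dep \<rho> V"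
      using V unfolding q_indep_def q_dep_def by simp
    then obtain C where "q_circuit \<rho> C" "C \<subseteq> V"
      by (rule q_dep_contains_circuit)
    then show False
      using no_circuit by blast
  qed
qed

lemma sum_spaces_eq_zero_iff: "sum_spaces X = {0} \<longleftrightarrow> (\<forall>C\<in>X. C \<subseteq> {0})"
  unfolding sum_spaces_def
proof
  assume "vec.span (\<Union>X) = {0}"
  then show "\<forall>C\<in>X. C \<subseteq> {0}"
    using vec.span_superset by blast
next
  assume "\<forall>C\<in>X. C \<subseteq> {0}"
  then have "vec.span (\<Union>X) \<subseteq> {0}"
    by (intro vec.span_minimal) auto
  then show "vec.span (\<Union>X) = {0}"
    using vec.span_zero by blast
qed

theorem theorem3p6:
  fixes \<rho> :: "('f::{field,finite}, 'n::finite) rankfun" and V :: "('f ^ 'n) set"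
  assumes "qmatroid \<rho>" and "vec.subspace V"
  shows "cyc \<rho> V = sum_spaces {C. q_circuit \<rho> C \<and> C \<subseteq> V}
    \<and> q_open \<rho> (cyc \<rho> V)
    \<and> cyc \<rho> V \<subseteq> V
    \<and> (\<forall>U. q_open \<rho> U \<and> U \<subseteq> V \<longrightarrow> U \<subseteq> cyc \<rho> V)
    \<and> (q_indep \<rho> V \<longleftrightarrow> cyc \<rho> V = {0})"
proof -
  have cyc: "cyc \<rho> V = sum_spaces {C. q_circuit \<rho> C \<and> C \<subseteq> V}"
    using cyc_eq_sum_circuits[OF assms] .
  moreover have "q_open \<rho> (cyc \<rho> V)"
    unfolding cyc q_open_def by (intro exI[of _ "{C. q_circuit \<rho> C \<and> C \<subseteq> V}"]) simp
  moreover have "cyc \<rho> V \<subseteq> V"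
    unfolding cyc_def by blast
  moreover have "\<forall>U. q_open \<rho> U \<and> U \<subseteq> V \<longrightarrow> U \<subseteq> cyc \<rho> V"
    unfolding cyc using q_open_subset_sum_circuits by blast
  moreover have "q_indep \<rho> V \<longleftrightarrow> cyc \<rho> V = {0}"
    unfolding cyc sum_spaces_eq_zero_iff q_indep_iff_no_circuit[OF assms]
    using q_circuit_not_subset_q_indep[OF assms(1) q_indep_zero[OF assms(1)]] by blast
  ultimately show ?thesis
    by blast
qed

end
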